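(* Let $p>2$ be a prime. For integers $a,b$ define the Kloosterman sum $K(a,b)=\sum_{x=1}^{p-1} e_p\left(ax+b\overline{x}\right)$, where $\overline{x}$ denotes the inverse of $x$ modulo $p$ and $e_p(\alpha)=\exp\left(\frac{2\pi i\alpha}{p}\right)$. Then for any integers $a,b$ with $p\nmid ab$ we have \[ K(a,b)^2 = p + \sum_{l=1}^{p} \left(\frac{l^2-4l}{p}\right) K(a,lb), \] where $\left(\frac{\cdot}{p}\right)$ is the Legendre symbol.
   Context: $\left(\frac{\cdot}{p}\right)$ denotes the Legendre symbol modulo $p$ (with value $0$ at multiples of $p$). *)

theory Defs
  imports "HOL-Analysis.Analysis" "HOL-Number_Theory.Number_Theory"
begin

definition e_p :: "int \<Rightarrow> int \<Rightarrow> complex" where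
  "e_p p \<alpha> = exp (2 * pi * \<i> * of_int \<alpha> / of_int p)"

definition kloosterman :: "int \<Rightarrow> int \<Rightarrow> int \<Rightarrow> complex" where
  "kloosterman p a b = (\<Sum>x = 1..p - 1. e_p p (a * x + b * modular_inverse p x))"

end

theory Submission
  imports Defs
begin

(* Expanding the square and substituting y = x t turns K(a,b)^2 into the sum over units t of
   K(a (1 + t), b (1 + t^-1)). For t <> -1 this equals K(a, (t + t^-1 + 2) b), while t = -1
   contributes p - 1. Grouping by m = t + t^-1 + 2, the number of units t in the fibre of m is the
   number of roots of t^2 + (2 - m) t + 1, namely 1 + ((m^2 - 4 m)/p); the constant part
   sum_m K(a, m b) vanishes by orthogonality of additive characters. *)

lemma e_p_add: "e_p p (x + y) = e_p p x * e_p p y"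
  unfolding e_p_def by (simp add: add_divide_distrib distrib_left exp_add)

lemma e_p_0 [simp]: "e_p p 0 = 1"
  by (simp add: e_p_def)

lemma e_p_mult_self [simp]: "e_p p (p * k) = 1"
proof (cases "p = 0")
  case False
  hence "2 * pi * \<i> * of_int (p * k) / of_int p = (2 * of_int k * pi) * \<i>"
    by (simp add: field_simps)
  thus ?thesis
    unfolding e_p_def by (metis Ints_of_int exp_integer_2pi)
qed (simp add: e_p_def)

lemma e_p_cong: "[x = y] (mod p) \<Longrightarrow> e_p p x = e_p p y"
  by (metis cong_iff_lin e_p_add e_p_mult_self mult_1_right)

lemma e_p_eq_1_iff:
  assumes "p \<noteq> 0"
  shows "e_p p c = 1 \<longleftrightarrow> p dvd c"
proof
  assume "e_p p c = 1"
  then obtain n :: int where "2 * pi * of_int c / of_int p = 2 * of_int n * pi"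
    unfolding e_p_def exp_eq_1 by auto
  hence "real_of_int c = real_of_int (n * p)"
    using assms by (simp add: field_simps)
  thus "p dvd c"
    by (simp only: of_int_eq_iff) simp
qed auto

lemma bij_betw_int_remainders_affine:
  fixes c d p :: int
  assumes "p > 0" "coprime c p"
  shows "bij_betw (\<lambda>x. (c * x + d) mod p) {0..<p} {0..<p}"
proof -
  have "inj_on (\<lambda>x. (c * x + d) mod p) {0..<p}"
  proof (rule inj_onI)
    fix x y assume xy: "x \<in> {0..<p}" "y \<in> {0..<p}" "(c * x + d) mod p = (c * y + d) mod p"
    hence "[c * x = c * y] (mod p)"
      by (metis cong_add_rcancel cong_def)
    hence "[x = y] (mod p)"
      using assms(2) by (metis cong_mult_lcancel coprime_commute)
    thus "x = y"
      using xy(1,2) by (simp add: cong_def)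
  qed
  moreover have "(\<lambda>x. (c * x + d) mod p) ` {0..<p} \<subseteq> {0..<p}"
    using assms(1) by auto
  ultimately show ?thesis
    by (simp add: bij_betw_def endo_inj_surj)
qed

lemma sum_residues_affine_reindex:
  fixes c d p :: int
  assumes "p > 0" "coprime c p" and f: "\<And>x y. [x = y] (mod p) \<Longrightarrow> f x = f y"
  shows "(\<Sum>x\<in>{0..<p}. f (c * x + d)) = (\<Sum>x\<in>{0..<p}. f x)"
proof -
  have "(\<Sum>x\<in>{0..<p}. f (c * x + d)) = (\<Sum>x\<in>{0..<p}. f ((c * x + d) mod p))"
    by (intro sum.cong refl f) (simp add: cong_def)
  also have "\<dots> = (\<Sum>x\<in>{0..<p}. f x)"
    using sum.reindex_bij_betw[OF bij_betw_int_remainders_affine[OF assms(1,2)]] .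
  finally show ?thesis .
qed

lemma sum_units_mult_reindex:
  fixes c p :: int
  assumes "coprime c p" and f: "\<And>x y. [x = y] (mod p) \<Longrightarrow> f x = f y"
  shows "(\<Sum>x\<in>{1..<p}. f (c * x)) = (\<Sum>x\<in>{1..<p}. f x)"
proof -
  have "(\<Sum>x\<in>{1..<p}. f (c * x)) = (\<Sum>x\<in>{1..<p}. f (c * x mod p))"
    by (intro sum.cong refl f) (simp add: cong_def)
  also have "\<dots> = (\<Sum>x\<in>{1..<p}. f x)"
    using sum.reindex_bij_betw[OF bij_betw_int_remainders_mult[OF assms(1)]] .
  finally show ?thesis .
qed

lemma sum_e_p_residues:
  assumes "p > 0" "\<not> p dvd c"
  shows "(\<Sum>x\<in>{0..<p}. e_p p (c * x)) = 0"
proof -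
  let ?S = "\<Sum>x\<in>{0..<p}. e_p p (c * x)"
  have "e_p p c * ?S = (\<Sum>x\<in>{0..<p}. e_p p (c * (1 * x + 1)))"
    by (simp add: sum_distrib_left e_p_add[symmetric] algebra_simps)
  also have "\<dots> = ?S"
    using assms(1) by (intro sum_residues_affine_reindex[where f = "\<lambda>x. e_p p (c * x)"] e_p_cong)
      (auto intro: cong_mult)
  finally have "(e_p p c - 1) * ?S = 0"
    by (simp add: algebra_simps)
  thus ?thesis
    using assms e_p_eq_1_iff[of p c] by simp
qed

lemma sum_e_p_units:
  assumes "p > 0" "\<not> p dvd c"
  shows "(\<Sum>x\<in>{1..<p}. e_p p (c * x)) = -1"
proof -
  have "{0..<p} = insert 0 {1..<p}"
    using assms(1) by auto
  thus ?thesis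
    using sum_e_p_residues[OF assms] by (simp add: add_eq_0_iff)
qed

lemma coprime_if_in_units:
  fixes p x :: int
  assumes "prime p" "x \<in> {1..<p}"
  shows "coprime x p"
  using assms zdvd_not_zless[of x p] by (auto intro: prime_imp_coprime simp: coprime_commute)

lemma modular_inverse_in_units:
  fixes p x :: int
  assumes "prime p" "x \<in> {1..<p}"
  shows "modular_inverse p x \<in> {1..<p}"
  using assms prime_gt_1_int[OF assms(1)] coprime_if_in_units[OF assms]
  by (auto simp: mult_modular_inverse_int_pos modular_inverse_int_less int_one_le_iff_zero_less)

lemma modular_inverse_cong:
  fixes p x y :: int
  assumes "p > 0" "[x = y] (mod p)"
  shows "modular_inverse p x = modular_inverse p y"
proof (cases "coprime x p")
  case True
  show ?thesis
  proof (rule sym, rule modular_inverse_int_eqI)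
    show "modular_inverse p x \<in> {0..<p}"
      using assms(1) by (simp add: modular_inverse_int_nonneg modular_inverse_int_less)
    have "[y * modular_inverse p x = x * modular_inverse p x] (mod p)"
      using assms(2) by (intro cong_mult cong_refl) (rule cong_sym)
    thus "[y * modular_inverse p x = 1] (mod p)"
      using True cong_modular_inverse1 cong_trans by blast
  qed
next
  case False
  hence "\<not> coprime y p"
    using assms(2) cong_imp_coprime cong_sym by blast
  with False show ?thesis
    by simp
qed

lemma cong_modular_inverse_mult_cancel:
  fixes c p x :: int
  assumes "p > 0" "coprime c p"
  shows "[c * modular_inverse p (c * x) = modular_inverse p x] (mod p)"
proof (cases "coprime x p")
  case True
  have "[c * modular_inverse p (c * x) = c * (modular_inverse p x * modular_inverse p c)] (mod p)"
    using modular_inverse_int_mult[OF assms(2) True assms(1)]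
    by (intro cong_mult cong_refl) (simp add: cong_def)
  also have "c * (modular_inverse p x * modular_inverse p c) = modular_inverse p x * (c * modular_inverse p c)"
    by (simp add: algebra_simps)
  also have "[\<dots> = modular_inverse p x * 1] (mod p)"
    using assms(2) by (intro cong_mult cong_refl cong_modular_inverse1)
  finally show ?thesis
    by simp
qed simp

lemma kloosterman_def_units:
  "kloosterman p a b = (\<Sum>x\<in>{1..<p}. e_p p (a * x + b * modular_inverse p x))"
proof -
  have "{1..p - 1} = {1..<p}"
    by auto
  thus ?thesis
    unfolding kloosterman_def by simp
qed

lemma kloosterman_cong:
  assumes "p > 0" "[a = a'] (mod p)" "[b = b'] (mod p)"
  shows "kloosterman p a b = kloosterman p a' b'"
  unfolding kloosterman_def using assms by (intro sum.cong refl e_p_cong cong_add cong_mult) auto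

lemma kloosterman_mult_left:
  assumes "p > 0" "coprime c p"
  shows "kloosterman p (c * a) b = kloosterman p a (c * b)"
proof -
  define f where "f y = e_p p (a * y + c * b * modular_inverse p y)" for y
  have f_cong: "f x = f y" if "[x = y] (mod p)" for x y
    unfolding f_def modular_inverse_cong[OF assms(1) that]
    by (intro e_p_cong cong_add cong_mult cong_refl that)
  have "f (c * x) = e_p p (c * a * x + b * modular_inverse p x)" for x
  proof -
    have "[b * (c * modular_inverse p (c * x)) = b * modular_inverse p x] (mod p)"
      using cong_modular_inverse_mult_cancel[OF assms] by (rule cong_mult[OF cong_refl])
    thus ?thesis
      unfolding f_def by (intro e_p_cong cong_add) (simp_all add: algebra_simps)
  qed
  hence "kloosterman p (c * a) b = (\<Sum>x\<in>{1..<p}. f (c * x))"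
    unfolding kloosterman_def_units by simp
  also have "\<dots> = (\<Sum>x\<in>{1..<p}. f x)"
    by (rule sum_units_mult_reindex[OF assms(2) f_cong])
  also have "\<dots> = kloosterman p a (c * b)"
    unfolding kloosterman_def_units f_def by (simp add: mult.assoc)
  finally show ?thesis .
qed

lemma kloosterman_trivial:
  assumes "p > 0" "p dvd a" "p dvd b"
  shows "kloosterman p a b = of_int (p - 1)"
proof -
  obtain k l where "a = p * k" "b = p * l"
    using assms(2,3) by (auto elim!: dvdE)
  hence "a * x + b * modular_inverse p x = p * (k * x + l * modular_inverse p x)" for x
    by (simp add: algebra_simps)
  hence "e_p p (a * x + b * modular_inverse p x) = 1" for x
    by (metis e_p_mult_self)
  hence "kloosterman p a b = (\<Sum>x\<in>{1..<p}. 1)"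
    unfolding kloosterman_def_units by simp
  thus ?thesis
    using assms(1) by (simp add: of_nat_nat)
qed

lemma kloosterman_eq_minus_one:
  assumes "p > 0" "\<not> p dvd a" "p dvd b"
  shows "kloosterman p a b = -1"
proof -
  have b_vanishes: "[a * x + b * modular_inverse p x = a * x] (mod p)" for x
    using assms(3) by (simp add: cong_iff_dvd_diff)
  have "kloosterman p a b = (\<Sum>x\<in>{1..<p}. e_p p (a * x))"
    unfolding kloosterman_def_units by (intro sum.cong refl e_p_cong b_vanishes)
  thus ?thesis
    using sum_e_p_units[OF assms(1,2)] by simp
qed

lemma kloosterman_square:
  fixes p a b :: int
  assumes "prime p"
  shows "(kloosterman p a b)\<^sup>2 =
    (\<Sum>t\<in>{1..<p}. kloosterman p (a * (1 + t)) (b * (1 + modular_inverse p t)))"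
proof -
  have p: "p > 0"
    using assms prime_gt_0_int by blast
  define f where "f x y = e_p p (a * (x + y) + b * (modular_inverse p x + modular_inverse p y))" for x y
  have "(kloosterman p a b)\<^sup>2 = (\<Sum>x\<in>{1..<p}. \<Sum>y\<in>{1..<p}. f x y)"
    unfolding power2_eq_square kloosterman_def_units sum_product f_def
    by (simp add: e_p_add[symmetric] algebra_simps)
  also have "\<dots> = (\<Sum>x\<in>{1..<p}. \<Sum>t\<in>{1..<p}. f x (x * t))"
  proof -
    have f_cong: "f x y = f x z" if "[y = z] (mod p)" for x y z
      unfolding f_def modular_inverse_cong[OF p that]
      by (intro e_p_cong cong_add cong_mult cong_refl that)
    show ?thesis
      using assms by (intro sum.cong refl sum_units_mult_reindex[symmetric] f_cong coprime_if_in_units)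
  qed
  also have "\<dots> = (\<Sum>x\<in>{1..<p}. \<Sum>t\<in>{1..<p}.
      e_p p (a * (1 + t) * x + b * (1 + modular_inverse p t) * modular_inverse p x))"
  proof (intro sum.cong refl)
    fix x t assume "x \<in> {1..<p}" "t \<in> {1..<p}"
    hence "coprime x p" "coprime t p"
      using assms coprime_if_in_units by blast+
    hence "[modular_inverse p (x * t) = modular_inverse p t * modular_inverse p x] (mod p)"
      using modular_inverse_int_mult[OF _ _ p] by (simp add: cong_def)
    hence "[a * (x + x * t) + b * (modular_inverse p x + modular_inverse p (x * t)) =
        a * (x + x * t) + b * (modular_inverse p x + modular_inverse p t * modular_inverse p x)] (mod p)"
      by (intro cong_add cong_mult cong_refl)
    thus "f x (x * t) =
        e_p p (a * (1 + t) * x + b * (1 + modular_inverse p t) * modular_inverse p x)"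
      unfolding f_def by (auto dest: e_p_cong simp: algebra_simps)
  qed
  also have "\<dots> = (\<Sum>t\<in>{1..<p}. kloosterman p (a * (1 + t)) (b * (1 + modular_inverse p t)))"
    unfolding kloosterman_def_units by (rule sum.swap)
  finally show ?thesis .
qed

lemma sum_kloosterman_dilates:
  fixes p a b :: int
  assumes "prime p" "\<not> p dvd b"
  shows "(\<Sum>m\<in>{0..<p}. kloosterman p a (m * b)) = 0"
proof -
  have p: "p > 0"
    using assms prime_gt_0_int by blast
  have "(\<Sum>m\<in>{0..<p}. kloosterman p a (m * b)) =
      (\<Sum>x\<in>{1..<p}. e_p p (a * x) * (\<Sum>m\<in>{0..<p}. e_p p (b * modular_inverse p x * m)))"
    unfolding kloosterman_def_units sum_distrib_left
    by (subst sum.swap) (simp add: e_p_add[symmetric] algebra_simps)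
  also have "\<dots> = 0"
  proof (intro sum.neutral ballI)
    fix x assume "x \<in> {1..<p}"
    hence "modular_inverse p x \<in> {1..<p}"
      by (rule modular_inverse_in_units[OF assms(1)])
    hence "\<not> p dvd b * modular_inverse p x"
      using assms zdvd_not_zless[of "modular_inverse p x" p] by (auto simp: prime_dvd_mult_iff)
    thus "e_p p (a * x) * (\<Sum>m\<in>{0..<p}. e_p p (b * modular_inverse p x * m)) = 0"
      using sum_e_p_residues[OF p] by simp
  qed
  finally show ?thesis .
qed

lemma cong_square_iff:
  fixes p x y :: int
  assumes "prime p"
  shows "[x\<^sup>2 = y\<^sup>2] (mod p) \<longleftrightarrow> [x = y] (mod p) \<or> [x = - y] (mod p)"
proof -
  have "x\<^sup>2 - y\<^sup>2 = (x - y) * (x - - y)"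
    by (simp add: power2_eq_square algebra_simps)
  thus ?thesis
    using assms by (simp add: cong_iff_dvd_diff prime_dvd_mult_iff)
qed

lemma card_square_roots_mod_prime:
  fixes p D :: int
  assumes "prime p" "p > 2"
  shows "int (card {z\<in>{0..<p}. [z\<^sup>2 = D] (mod p)}) = 1 + Legendre D p"
proof (cases "QuadRes p D")
  case False
  hence no_roots: "{z\<in>{0..<p}. [z\<^sup>2 = D] (mod p)} = {}"
    unfolding QuadRes_def by auto
  have "\<not> [D = 0] (mod p)"
    using False unfolding QuadRes_def by (metis cong_sym zero_power2)
  thus ?thesis
    unfolding no_roots using False by (simp add: Legendre_def)
next
  case True
  then obtain y where y: "[y\<^sup>2 = D] (mod p)"
    unfolding QuadRes_def by blast
  have p: "p > 0"
    using assms by simp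
  have "[z\<^sup>2 = D] (mod p) \<longleftrightarrow> [z = y] (mod p) \<or> [z = - y] (mod p)" for z
    using cong_square_iff[OF assms(1), of z y] y by (meson cong_sym cong_trans)
  moreover have "[z = w] (mod p) \<longleftrightarrow> z = w mod p" if "z \<in> {0..<p}" for z w
    using that by (simp add: cong_def)
  ultimately have roots: "{z\<in>{0..<p}. [z\<^sup>2 = D] (mod p)} = {y mod p, - y mod p}"
    using p by auto
  have "[D = 0] (mod p) \<longleftrightarrow> p dvd y"
    using y assms(1) by (metis cong_0_iff cong_trans cong_sym prime_dvd_power_iff zero_less_numeral)
  moreover have "y mod p = - y mod p \<longleftrightarrow> p dvd y"
  proof -
    have "y mod p = - y mod p \<longleftrightarrow> p dvd 2 * y"
      by (simp add: cong_def[symmetric] cong_iff_dvd_diff)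
    also have "\<dots> \<longleftrightarrow> p dvd y"
      using assms zdvd_imp_le[of p 2] by (auto simp: prime_dvd_mult_iff)
    finally show ?thesis .
  qed
  ultimately show ?thesis
    unfolding roots using True by (auto simp: Legendre_def)
qed

lemma card_roots_quadratic_mod_prime:
  fixes p B C :: int
  assumes "prime p" "p > 2"
  shows "int (card {t\<in>{0..<p}. [t\<^sup>2 + B * t + C = 0] (mod p)}) = 1 + Legendre (B\<^sup>2 - 4 * C) p"
proof -
  let ?D = "B\<^sup>2 - 4 * C"
  have p: "p > 0"
    using assms by simp
  have "\<not> p dvd 4"
    using assms zdvd_imp_le[of p 4] prime_dvd_mult_iff[of p 2 2] zdvd_imp_le[of p 2] by auto
  hence completing_square: "[t\<^sup>2 + B * t + C = 0] (mod p) \<longleftrightarrow> [(2 * t + B)\<^sup>2 = ?D] (mod p)" for t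
  proof -
    have "(2 * t + B)\<^sup>2 - ?D = 4 * (t\<^sup>2 + B * t + C)"
      by (simp add: power2_eq_square algebra_simps)
    hence "[(2 * t + B)\<^sup>2 = ?D] (mod p) \<longleftrightarrow> p dvd 4 * (t\<^sup>2 + B * t + C)"
      by (simp only: cong_iff_dvd_diff)
    also have "\<dots> \<longleftrightarrow> [t\<^sup>2 + B * t + C = 0] (mod p)"
      by (simp only: prime_dvd_mult_iff[OF assms(1)] cong_0_iff \<open>\<not> p dvd 4\<close> simp_thms)
    finally show ?thesis ..
  qed
  define root where "root z = (if [z\<^sup>2 = ?D] (mod p) then 1 else 0 :: nat)" for z
  have root_cong: "root z = root w" if "[z = w] (mod p)" for z w
    unfolding root_def using cong_pow[OF that, of 2] by (meson cong_sym cong_trans)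
  have card_filter: "card {z\<in>{0..<p}. P z} = (\<Sum>z\<in>{0..<p}. if P z then 1 else 0)"
    for P :: "int \<Rightarrow> bool"
    by (simp only: card_eq_sum sum.inter_filter[OF finite_atLeastLessThan_int])
  have "card {t\<in>{0..<p}. [t\<^sup>2 + B * t + C = 0] (mod p)} = (\<Sum>t\<in>{0..<p}. root (2 * t + B))"
    unfolding completing_square card_filter root_def ..
  also have "\<dots> = (\<Sum>z\<in>{0..<p}. root z)"
    using assms prime_odd_int by (intro sum_residues_affine_reindex p root_cong) auto
  also have "\<dots> = card {z\<in>{0..<p}. [z\<^sup>2 = ?D] (mod p)}"
    unfolding card_filter root_def ..
  finally show ?thesis
    using card_square_roots_mod_prime[OF assms] by simp
qed

lemma card_fiber_add_inverse:
  fixes p m :: int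
  assumes "prime p" "p > 2"
  shows "int (card {t\<in>{1..<p}. [t + modular_inverse p t + 2 = m] (mod p)}) =
    1 + Legendre (m\<^sup>2 - 4 * m) p"
proof -
  have unit_case: "[t + modular_inverse p t + 2 = m] (mod p) \<longleftrightarrow>
      [t\<^sup>2 + (2 - m) * t + 1 = 0] (mod p)" if "t \<in> {1..<p}" for t
  proof -
    have "coprime t p"
      using assms(1) that by (rule coprime_if_in_units)
    have "t * (t + modular_inverse p t + 2 - m) = t\<^sup>2 + (2 - m) * t + t * modular_inverse p t"
      by (simp add: power2_eq_square algebra_simps)
    also have "[\<dots> = t\<^sup>2 + (2 - m) * t + 1] (mod p)"
      using \<open>coprime t p\<close> by (intro cong_add cong_refl cong_modular_inverse1)
    finally have "[t\<^sup>2 + (2 - m) * t + 1 = 0] (mod p) \<longleftrightarrow>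
        [t * (t + modular_inverse p t + 2 - m) = 0] (mod p)"
      by (meson cong_sym cong_trans)
    also have "\<dots> \<longleftrightarrow> [t + modular_inverse p t + 2 - m = 0] (mod p)"
      using \<open>coprime t p\<close> by (simp add: cong_0_iff coprime_commute coprime_dvd_mult_right_iff)
    finally show ?thesis
      by (simp add: cong_iff_dvd_diff cong_0_iff)
  qed
  have "\<not> [0\<^sup>2 + (2 - m) * 0 + 1 = 0] (mod p)"
    using assms by (simp add: cong_0_iff)
  hence "{t\<in>{0..<p}. [t\<^sup>2 + (2 - m) * t + 1 = 0] (mod p)} =
      {t\<in>{1..<p}. [t\<^sup>2 + (2 - m) * t + 1 = 0] (mod p)}"
    by (auto simp: order_le_less)
  also have "\<dots> = {t\<in>{1..<p}. [t + modular_inverse p t + 2 = m] (mod p)}"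
    using unit_case by blast
  finally have "{t\<in>{1..<p}. [t + modular_inverse p t + 2 = m] (mod p)} =
      {t\<in>{0..<p}. [t\<^sup>2 + (2 - m) * t + 1 = 0] (mod p)}" ..
  moreover have "(2 - m)\<^sup>2 - 4 * 1 = m\<^sup>2 - 4 * m"
    by (simp add: power2_eq_square algebra_simps)
  ultimately show ?thesis
    using card_roots_quadratic_mod_prime[OF assms, of "2 - m" 1] by simp
qed

lemma kloosterman_square_eq_sum_add_inverse:
  fixes p a b :: int
  assumes "prime p" "\<not> p dvd a"
  shows "(kloosterman p a b)\<^sup>2 =
    of_int p + (\<Sum>t\<in>{1..<p}. kloosterman p a ((t + modular_inverse p t + 2) * b))"
proof -
  have p: "p > 0"
    using assms prime_gt_0_int by blast
  have summand: "kloosterman p (a * (1 + t)) (b * (1 + modular_inverse p t)) =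
      kloosterman p a ((t + modular_inverse p t + 2) * b) + (if t = p - 1 then of_int p else 0)"
    if "t \<in> {1..<p}" for t
  proof (cases "t = p - 1")
    case True
    have "modular_inverse p (p - 1) = p - 1"
      using p by (intro modular_inverse_int_eqI) (auto simp: cong_iff_dvd_diff algebra_simps)
    hence "kloosterman p (a * (1 + t)) (b * (1 + modular_inverse p t)) = of_int (p - 1)"
      using True p by (intro kloosterman_trivial) auto
    moreover have "kloosterman p a ((t + modular_inverse p t + 2) * b) = -1"
      using True p assms(2) \<open>modular_inverse p (p - 1) = p - 1\<close>
      by (intro kloosterman_eq_minus_one) auto
    ultimately show ?thesis
      using True by simp
  next
    case False
    hence "coprime (1 + t) p"
      using assms(1) that by (intro coprime_if_in_units) auto
    moreover have "[(1 + t) * (b * (1 + modular_inverse p t)) =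
        (t + modular_inverse p t + 2) * b] (mod p)"
    proof -
      have "(1 + t) * (b * (1 + modular_inverse p t)) =
          b * (1 + t + modular_inverse p t) + b * (t * modular_inverse p t)"
        by (simp add: algebra_simps)
      also have "[\<dots> = b * (1 + t + modular_inverse p t) + b * 1] (mod p)"
        using assms(1) that
        by (intro cong_add cong_mult cong_refl cong_modular_inverse1 coprime_if_in_units)
      finally show ?thesis
        by (simp add: algebra_simps)
    qed
    ultimately show ?thesis
      using False p
      by (simp add: mult.commute[of a] kloosterman_mult_left kloosterman_cong[OF p cong_refl])
  qed
  have "(kloosterman p a b)\<^sup>2 =
      (\<Sum>t\<in>{1..<p}. kloosterman p a ((t + modular_inverse p t + 2) * b) +
        (if t = p - 1 then of_int p else 0))"
    unfolding kloosterman_square[OF assms(1)] using summand by (rule sum.cong[OF refl])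
  also have "\<dots> = of_int p + (\<Sum>t\<in>{1..<p}. kloosterman p a ((t + modular_inverse p t + 2) * b))"
    using assms(1) prime_gt_1_int[OF assms(1)] by (simp add: sum.distrib)
  finally show ?thesis .
qed

lemma sum_kloosterman_add_inverse:
  fixes p a b :: int
  assumes "prime p" "p > 2" "\<not> p dvd b"
  shows "(\<Sum>t\<in>{1..<p}. kloosterman p a ((t + modular_inverse p t + 2) * b)) =
    (\<Sum>m\<in>{0..<p}. of_int (Legendre (m\<^sup>2 - 4 * m) p) * kloosterman p a (m * b))"
proof -
  have p: "p > 0"
    using assms by simp
  define trace where "trace t = (t + modular_inverse p t + 2) mod p" for t
  have fiber: "{t\<in>{1..<p}. trace t = m} = {t\<in>{1..<p}. [t + modular_inverse p t + 2 = m] (mod p)}"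
    if "m \<in> {0..<p}" for m
    using that by (auto simp: trace_def cong_def)
  have "(\<Sum>t\<in>{1..<p}. kloosterman p a ((t + modular_inverse p t + 2) * b)) =
      (\<Sum>t\<in>{1..<p}. kloosterman p a (trace t * b))"
    unfolding trace_def using p
    by (intro sum.cong refl kloosterman_cong cong_mult cong_refl cong_mod_rightI)
  also have "\<dots> = (\<Sum>m\<in>{0..<p}. \<Sum>t\<in>{t\<in>{1..<p}. trace t = m}. kloosterman p a (trace t * b))"
    using p by (intro sum.group[symmetric]) (auto simp: trace_def)
  also have "\<dots> = (\<Sum>m\<in>{0..<p}. (1 + of_int (Legendre (m\<^sup>2 - 4 * m) p)) * kloosterman p a (m * b))"
  proof (intro sum.cong refl)
    fix m assume "m \<in> {0..<p}"
    have "(\<Sum>t\<in>{t\<in>{1..<p}. trace t = m}. kloosterman p a (trace t * b)) =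
        of_int (int (card {t\<in>{1..<p}. trace t = m})) * kloosterman p a (m * b)"
      by simp
    thus "(\<Sum>t\<in>{t\<in>{1..<p}. trace t = m}. kloosterman p a (trace t * b)) =
        (1 + of_int (Legendre (m\<^sup>2 - 4 * m) p)) * kloosterman p a (m * b)"
      unfolding fiber[OF \<open>m \<in> {0..<p}\<close>] card_fiber_add_inverse[OF assms(1,2)] by simp
  qed
  also have "\<dots> = (\<Sum>m\<in>{0..<p}. of_int (Legendre (m\<^sup>2 - 4 * m) p) * kloosterman p a (m * b))"
    using sum_kloosterman_dilates[OF assms(1,3)] by (simp add: distrib_right sum.distrib)
  finally show ?thesis .
qed

theorem mainTheorem1:
  fixes p a b :: int
  assumes "prime p" and "p > 2" and "\<not> p dvd a * b"
  shows "(kloosterman p a b)\<^sup>2 =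
    of_int p + (\<Sum>l = 1..p. of_int (Legendre (l\<^sup>2 - 4 * l) p) * kloosterman p a (l * b))"
proof -
  have "\<not> p dvd a" "\<not> p dvd b"
    using assms(3) by auto
  define g where "g l = of_int (Legendre (l\<^sup>2 - 4 * l) p) * kloosterman p a (l * b)" for l
  have "g 0 = 0" "g p = 0"
    unfolding g_def by (simp_all add: Legendre_def cong_0_iff power2_eq_square)
  moreover have "{0..<p} = insert 0 {1..<p}" "{1..p} = insert p {1..<p}"
    using assms(2) by auto
  ultimately have "(\<Sum>m\<in>{0..<p}. g m) = (\<Sum>l = 1..p. g l)"
    by simp
  thus ?thesis
    unfolding kloosterman_square_eq_sum_add_inverse[OF assms(1) \<open>\<not> p dvd a\<close>]
      sum_kloosterman_add_inverse[OF assms(1,2) \<open>\<not> p dvd b\<close>] g_def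
    by simp
qed

end
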